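(* For all $t,s\in\Lambda^\infty$: if $t\to^\infty_\beta s$ and $t$ has a head normal form, then $s$ has a head normal form.
   Context: Fix an infinite set $V$ of variables and a set $C$ of constants with $V\cap C=\emptyset$, containing a distinguished constant $\bot$. $\Lambda^\infty$ is the set of infinitary lambda-terms: all finite and infinite terms generated coinductively by $t ::= c\mid x\mid t\,t\mid\lambda x.t$, identified up to $\alpha$-equivalence; $s[t/x]$ is capture-avoiding substitution; an atom is a variable or constant. $\to_\beta$ is the compatible closure of $\{((\lambda x.s)t,s[t/x])\}$, i.e. the least relation containing these pairs and closed under $s\to s'\Rightarrow st\to s't,\ ts\to ts',\ \lambda x.s\to\lambda x.s'$; $\to^*_\beta$ is its reflexive-transitive closure. A term is in head normal form (hnf) if it is $\lambda x_1\ldots x_m.\,a\,t_1\ldots t_n$ ($m,n\ge0$, $a$ an atom, $a\not\equiv\bot$); $t$ has a hnf if $t\to^*_\beta t'$ for some $t'$ in hnf. The infinitary closure $\to^\infty_\beta$ is the greatest relation such that whenever $s\to^\infty_\beta t$: $t\equiv a$ is an atom and $s\to^*_\beta a$; or $t\equiv t_1't_2'$, $s\to^*_\beta t_1t_2$ and $t_i\to^\infty_\beta t_i'$; or $t\equiv\lambda x.r'$, $s\to^*_\beta\lambda x.r$ and $r\to^\infty_\beta r'$. *)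

theory Defs
  imports Main "HOL-Library.BNF_Corec"
begin

text \<open>Infinitary lambda terms (finite and infinite), with de Bruijn indices for variables,
  so that syntactic equality is alpha-equivalence. 'c is the type of constants.\<close>

codatatype 'c lterm = Cst 'c | Var nat | App "'c lterm" "'c lterm" | Lam "'c lterm"

primcorec lift :: "nat \<Rightarrow> 'c lterm \<Rightarrow> 'c lterm" where
  "lift k t = (case t of
      Cst c \<Rightarrow> Cst c
    | Var n \<Rightarrow> Var (if n < k then n else Suc n)
    | App s u \<Rightarrow> App (lift k s) (lift k u)
    | Lam s \<Rightarrow> Lam (lift (Suc k) s))"

corec subst :: "nat \<Rightarrow> 'c lterm \<Rightarrow> 'c lterm \<Rightarrow> 'c lterm" where
  "subst k u t = (case t of
      Cst c \<Rightarrow> Cst c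
    | Var n \<Rightarrow> (if n = k then u else Var (if n < k then n else n - 1))
    | App s r \<Rightarrow> App (subst k u s) (subst k u r)
    | Lam s \<Rightarrow> Lam (subst (Suc k) (lift 0 u) s))"

inductive beta :: "'c lterm \<Rightarrow> 'c lterm \<Rightarrow> bool" where
  root: "beta (App (Lam s) t) (subst 0 t s)"
| appL: "beta s s' \<Longrightarrow> beta (App s t) (App s' t)"
| appR: "beta s s' \<Longrightarrow> beta (App t s) (App t s')"
| lam: "beta s s' \<Longrightarrow> beta (Lam s) (Lam s')"

abbreviation beta_star :: "'c lterm \<Rightarrow> 'c lterm \<Rightarrow> bool" where
  "beta_star \<equiv> beta\<^sup>*\<^sup>*"

definition lams :: "nat \<Rightarrow> 'c lterm \<Rightarrow> 'c lterm" where
  "lams m t = (Lam ^^ m) t"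

definition apps :: "'c lterm \<Rightarrow> 'c lterm list \<Rightarrow> 'c lterm" where
  "apps h ts = foldl App h ts"

definition is_atom :: "'c lterm \<Rightarrow> bool" where
  "is_atom a \<longleftrightarrow> (\<exists>n. a = Var n) \<or> (\<exists>c. a = Cst c)"

text \<open>Head normal form relative to the distinguished constant cbot (the paper's bottom).\<close>
definition hnf :: "'c \<Rightarrow> 'c lterm \<Rightarrow> bool" where
  "hnf cbot t \<longleftrightarrow> (\<exists>m a ts. t = lams m (apps a ts) \<and> is_atom a \<and> a \<noteq> Cst cbot)"

definition has_hnf :: "'c \<Rightarrow> 'c lterm \<Rightarrow> bool" where
  "has_hnf cbot t \<longleftrightarrow> (\<exists>t'. beta_star t t' \<and> hnf cbot t')"

coinductive beta_inf :: "'c lterm \<Rightarrow> 'c lterm \<Rightarrow> bool" where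
  atom: "is_atom a \<Longrightarrow> beta_star s a \<Longrightarrow> beta_inf s a"
| app: "beta_star s (App t1 t2) \<Longrightarrow> beta_inf t1 t1' \<Longrightarrow> beta_inf t2 t2' \<Longrightarrow> beta_inf s (App t1' t2')"
| lam: "beta_star s (Lam r) \<Longrightarrow> beta_inf r r' \<Longrightarrow> beta_inf s (Lam r')"

end

theory Submission
  imports Defs "HOL-Library.Multiset" "HOL-Library.Function_Algebras"
begin

(* Non-idempotent intersection types (de Carvalho's System R) characterise head normalisation:
   a term is typable iff it has a head normal form. Typability is preserved by beta-expansion, and
   beta-reduction never increases the size of a typing derivation, while contracting a typed redex
   strictly decreases it. A derivation for t can therefore be carried along t \<rightarrow>\<^sup>\<infinity> s by
   well-founded induction on its size: each layer of the coinductive reduction is a finite reduction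
   followed by strictly smaller subderivations. A head normal form of t thus yields a typing of t,
   hence one of s, hence a head normal form of s. *)

(* Arr M T is the intersection arrow: M holds one argument type per use of the argument.
   A context assigns a multiset of types to each de Bruijn index. *)
datatype ity = Base | Arr "ity multiset" ity

type_synonym ctx = "nat \<Rightarrow> ity multiset"

definition ctx_single :: "nat \<Rightarrow> ity \<Rightarrow> ctx" where
  "ctx_single x T = (0 :: ctx)(x := {#T#})"

definition ctx_drop :: "nat \<Rightarrow> ctx \<Rightarrow> ctx" where
  "ctx_drop k G = (\<lambda>i. if i < k then G i else G (Suc i))"

definition ctx_insert :: "nat \<Rightarrow> ctx \<Rightarrow> ctx" where
  "ctx_insert k G = (\<lambda>i. if i < k then G i else if i = k then {#} else G (i - 1))"

(* The induct method instantiates predicates in eta-expanded form; with these rules as simp rules,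
   contexts such as G + D would then be rewritten into pointwise lambda terms. *)
declare plus_fun_apply [simp del] zero_fun_apply [simp del]

lemma ctx_single_apply [simp]: "ctx_single x T x = {#T#}" "y \<noteq> x \<Longrightarrow> ctx_single x T y = {#}"
  by (simp_all add: ctx_single_def zero_fun_apply)

lemmas ctx_defs = ctx_single_def ctx_drop_def ctx_insert_def plus_fun_apply zero_fun_apply

lemma ctx_drop_zero [simp]: "ctx_drop k 0 = 0"
  and ctx_insert_zero [simp]: "ctx_insert k 0 = 0"
  and ctx_drop_add [simp]: "ctx_drop k (G + D) = ctx_drop k G + ctx_drop k D"
  and ctx_insert_add [simp]: "ctx_insert k (G + D) = ctx_insert k G + ctx_insert k D"
  by (auto simp: ctx_defs fun_eq_iff)

lemma ctx_drop_single_self [simp]: "ctx_drop k (ctx_single k T) = 0"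
  and ctx_drop_single:
    "x \<noteq> k \<Longrightarrow> ctx_drop k (ctx_single x T) = ctx_single (if x < k then x else x - 1) T"
  and ctx_insert_single [simp]:
    "ctx_insert k (ctx_single x T) = ctx_single (if x < k then x else Suc x) T"
  by (auto simp: ctx_defs fun_eq_iff)

lemma ctx_drop_0_drop_Suc [simp]: "ctx_drop 0 (ctx_drop (Suc k) G) = ctx_drop k (ctx_drop 0 G)"
  and ctx_drop_0_insert_Suc [simp]: "ctx_drop 0 (ctx_insert (Suc k) G) = ctx_insert k (ctx_drop 0 G)"
  and ctx_drop_insert [simp]: "ctx_drop k (ctx_insert k G) = G"
  and ctx_drop_Suc_0 [simp]: "ctx_drop (Suc k) G 0 = G 0"
  and ctx_insert_Suc_0 [simp]: "ctx_insert (Suc k) G 0 = G 0"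
  by (auto simp: ctx_defs fun_eq_iff)

(* The last argument is the size of the derivation; typings types u once for each element of the
   multiset. The constant cbot is untypable, as it is excluded from head normal forms. *)
inductive typing :: "'c \<Rightarrow> ctx \<Rightarrow> 'c lterm \<Rightarrow> ity \<Rightarrow> nat \<Rightarrow> bool"
  and typings :: "'c \<Rightarrow> ctx \<Rightarrow> 'c lterm \<Rightarrow> ity multiset \<Rightarrow> nat \<Rightarrow> bool"
  for cbot where
  Var: "typing cbot (ctx_single x T) (Var x) T 1"
| Cst: "c \<noteq> cbot \<Longrightarrow> typing cbot 0 (Cst c) T 1"
| Lam: "typing cbot G t T n \<Longrightarrow> typing cbot (ctx_drop 0 G) (Lam t) (Arr (G 0) T) (Suc n)"
| App: "typing cbot G t (Arr M T) n \<Longrightarrow> typings cbot D u M m \<Longrightarrow>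
    typing cbot (G + D) (App t u) T (Suc (n + m))"
| empty: "typings cbot 0 u {#} 0"
| add: "typings cbot G u M n \<Longrightarrow> typing cbot D u T m \<Longrightarrow>
    typings cbot (G + D) u (add_mset T M) (n + m)"

inductive_cases typing_CstE: "typing cbot G (Cst c) T n"
inductive_cases typing_LamE: "typing cbot G (Lam t) T n"
inductive_cases typing_AppE: "typing cbot G (App t u) T n"
inductive_cases typings_emptyE: "typings cbot G u {#} n"
inductive_cases typings_addE: "typings cbot G u (add_mset T M) n"

lemma typings_induct [consumes 1, case_names empty add]:
  assumes "typings cbot G u M n"
    and "P 0 {#} 0"
    and "\<And>G M n D T m. typings cbot G u M n \<Longrightarrow> P G M n \<Longrightarrow> typing cbot D u T m \<Longrightarrow>
      P (G + D) (add_mset T M) (n + m)"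
  shows "P G M n"
proof -
  have "typing cbot G' t T' n' \<Longrightarrow> True"
    and "typings cbot G u' M n \<Longrightarrow> u' = u \<Longrightarrow> P G M n" for G' t T' n' u'
    by (induction rule: typing_typings.inducts) (use assms(2,3) in auto)
  with assms(1) show ?thesis by blast
qed

lemma typings_empty_iff: "typings cbot G u {#} n \<longleftrightarrow> G = 0 \<and> n = 0"
  by (auto elim: typings_emptyE intro: typing_typings.empty)

lemma typings_single_iff: "typings cbot G u {#T#} n \<longleftrightarrow> typing cbot G u T n"
proof
  assume "typing cbot G u T n"
  from typing_typings.add[OF typing_typings.empty this] show "typings cbot G u {#T#} n"
    by simp
qed (auto elim!: typings_addE simp: typings_empty_iff)

lemma typings_union:
  assumes "typings cbot G u M m" and "typings cbot D u N n"
  shows "typings cbot (G + D) u (M + N) (m + n)"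
  using assms(2)
proof (induction rule: typings_induct)
  case empty
  then show ?case using assms(1) by simp
next
  case (add D N n D' T n')
  then show ?case using typing_typings.add[OF add.IH add.hyps(2)] by (simp add: ac_simps)
qed

lemma add_mset_eq_union_cases:
  assumes "add_mset T K = M + N"
  obtains M0 where "M = add_mset T M0" "K = M0 + N"
    | N0 where "N = add_mset T N0" "K = M + N0"
proof (cases "T \<in># M")
  case True
  then obtain M0 where "M = add_mset T M0" by (meson multi_member_split)
  then show ?thesis using assms that(1) by auto
next
  case False
  then have "T \<in># N" using assms by (metis union_iff union_single_eq_member)
  then obtain N0 where "N = add_mset T N0" by (meson multi_member_split)
  then show ?thesis using assms that(2) by auto
qed

lemma typings_split:
  assumes "typings cbot D u (M + N) m"
  obtains D1 D2 m1 m2 where "D = D1 + D2" "m = m1 + m2"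
    "typings cbot D1 u M m1" "typings cbot D2 u N m2"
proof -
  have "K = M + N \<Longrightarrow> \<exists>D1 D2 m1 m2. D = D1 + D2 \<and> m = m1 + m2 \<and>
      typings cbot D1 u M m1 \<and> typings cbot D2 u N m2"
    if "typings cbot D u K m" for K M N
    using that
  proof (induction arbitrary: M N rule: typings_induct)
    case empty
    then show ?case by (auto simp: typings_empty_iff)
  next
    case (add G K n D T m)
    from \<open>add_mset T K = M + N\<close> show ?case
    proof (cases rule: add_mset_eq_union_cases)
      case (1 M0)
      with add.IH obtain D1 D2 m1 m2 where "G = D1 + D2" "n = m1 + m2"
        "typings cbot D1 u M0 m1" "typings cbot D2 u N m2" by blast
      with 1 add.hyps(2) show ?thesis
        by (intro exI[of _ "D1 + D"] exI[of _ D2] exI[of _ "m1 + m"] exI[of _ m2])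
          (auto intro: typing_typings.add simp: ac_simps)
    next
      case (2 N0)
      with add.IH obtain D1 D2 m1 m2 where "G = D1 + D2" "n = m1 + m2"
        "typings cbot D1 u M m1" "typings cbot D2 u N0 m2" by blast
      with 2 add.hyps(2) show ?thesis
        by (intro exI[of _ D1] exI[of _ "D2 + D"] exI[of _ m1] exI[of _ "m2 + m"])
          (auto intro: typing_typings.add simp: ac_simps)
    qed
  qed
  with assms that show ?thesis by blast
qed

lemma typings_transfer:
  assumes "typings cbot G u M n"
    and "R 0 0" and "\<And>a b a' b'. R a a' \<Longrightarrow> R b b' \<Longrightarrow> R (a + b) (a' + b')"
    and "\<And>D T k. k \<le> n \<Longrightarrow> typing cbot D u T k \<Longrightarrow> \<exists>k'. R k k' \<and> typing cbot D u' T k'"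
  shows "\<exists>n'. R n n' \<and> typings cbot G u' M n'"
  using assms(1,4)
proof (induction rule: typings_induct)
  case empty
  show ?case by (rule exI[of _ 0], rule conjI, fact assms(2), rule typing_typings.empty)
next
  case (add G M n D T m)
  have "\<exists>n'. R n n' \<and> typings cbot G u' M n'"
  proof (rule add.IH)
    fix D' T' k
    assume "k \<le> n" "typing cbot D' u T' k"
    then show "\<exists>k'. R k k' \<and> typing cbot D' u' T' k'" by (intro add.prems) auto
  qed
  moreover have "\<exists>m'. R m m' \<and> typing cbot D u' T m'"
    using add.prems add.hyps(2) by simp
  ultimately obtain n' m' where "R n n'" "typings cbot G u' M n'" "R m m'" "typing cbot D u' T m'"
    by blast
  then show ?case using assms(3) typing_typings.add by (intro exI[of _ "n' + m'"]) simp
qed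

corollary typings_transfer_le:
  assumes "typings cbot G u M n"
    and "\<And>D T k. k \<le> n \<Longrightarrow> typing cbot D u T k \<Longrightarrow> \<exists>k'\<le>k. typing cbot D u' T k'"
  shows "\<exists>n'\<le>n. typings cbot G u' M n'"
proof -
  have "\<exists>n'. n' \<le> n \<and> typings cbot G u' M n'"
    by (rule typings_transfer[OF assms(1), where R = "\<lambda>k k'. k' \<le> k"])
      (use assms(2) in \<open>auto intro: add_mono\<close>)
  then show ?thesis by blast
qed

corollary typings_transfer_ex:
  assumes "typings cbot G u M n"
    and "\<And>D T k. k \<le> n \<Longrightarrow> typing cbot D u T k \<Longrightarrow> \<exists>k'. typing cbot D u' T k'"
  shows "\<exists>n'. typings cbot G u' M n'"
proof -
  have "\<exists>n'. True \<and> typings cbot G u' M n'"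
    by (rule typings_transfer[OF assms(1), where R = "\<lambda>_ _. True"]) (use assms(2) in auto)
  then show ?thesis by blast
qed

lemma lift_simps [simp]:
  "lift k (Cst c) = Cst c"
  "lift k (Var x) = Var (if x < k then x else Suc x)"
  "lift k (App s u) = App (lift k s) (lift k u)"
  "lift k (Lam s) = Lam (lift (Suc k) s)"
  by (simp_all add: lift.code)

lemma subst_simps [simp]:
  "subst k u (Cst c) = Cst c"
  "subst k u (Var x) = (if x = k then u else Var (if x < k then x else x - 1))"
  "subst k u (App s r) = App (subst k u s) (subst k u r)"
  "subst k u (Lam s) = Lam (subst (Suc k) (lift 0 u) s)"
  by (simp_all add: subst.code)

lemma typing_lift:
  shows "typing cbot G u T n \<Longrightarrow> typing cbot (ctx_insert k G) (lift k u) T n"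
    and "typings cbot G u M n \<Longrightarrow> typings cbot (ctx_insert k G) (lift k u) M n"
proof (induction arbitrary: k and k rule: typing_typings.inducts)
  case (Var x T)
  from typing_typings.Var[of cbot "if x < k then x else Suc x" T] show ?case by simp
next
  case (Cst c T)
  from typing_typings.Cst[OF Cst] show ?case by simp
next
  case (Lam G t T n)
  from typing_typings.Lam[OF Lam.IH(2)[of "Suc k"]] show ?case by simp
next
  case (App G t M T n D u m)
  from typing_typings.App[OF App.IH(2) App.IH(4)] show ?case by simp
next
  case (empty u)
  from typing_typings.empty show ?case by simp
next
  case (add G u M n D T m)
  from typing_typings.add[OF add.IH(2) add.IH(4)] show ?case by simp
qed

lemma typing_unlift:
  shows "typing cbot G s T n \<Longrightarrow> s = lift k v \<Longrightarrow> G k = {#} \<and> typing cbot (ctx_drop k G) v T n"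
    and "typings cbot G s M n \<Longrightarrow> s = lift k v \<Longrightarrow> G k = {#} \<and> typings cbot (ctx_drop k G) v M n"
proof (induction arbitrary: k v and k v rule: typing_typings.inducts)
  case (Var x T)
  then obtain j where "v = Var j" "x = (if j < k then j else Suc j)" by (cases v) auto
  then show ?case using typing_typings.Var[of cbot j T] by (simp add: ctx_drop_single)
next
  case (Cst c T)
  then have "v = Cst c" by (cases v) auto
  moreover have "(0 :: ctx) k = {#}" by (rule zero_fun_apply)
  ultimately show ?case using typing_typings.Cst[OF Cst(1)] by simp
next
  case (Lam G t T n)
  then obtain v' where "v = Lam v'" "t = lift (Suc k) v'" by (cases v) auto
  with Lam.IH(2) have "G (Suc k) = {#}" "typing cbot (ctx_drop (Suc k) G) v' T n" by blast+
  moreover have "ctx_drop 0 G k = G (Suc k)" by (simp add: ctx_drop_def)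
  ultimately show ?case using typing_typings.Lam \<open>v = Lam v'\<close> by fastforce
next
  case (App G t M T n D u m)
  then obtain v1 v2 where "v = App v1 v2" "t = lift k v1" "u = lift k v2" by (cases v) auto
  with App.IH(2,4) have "G k = {#}" "typing cbot (ctx_drop k G) v1 (Arr M T) n"
    "D k = {#}" "typings cbot (ctx_drop k D) v2 M m" by blast+
  moreover from this have "(G + D) k = {#}" by (simp add: plus_fun_apply)
  ultimately show ?case using typing_typings.App \<open>v = App v1 v2\<close> by fastforce
next
  case (empty u)
  have "(0 :: ctx) k = {#}" by (rule zero_fun_apply)
  then show ?case using typing_typings.empty by simp
next
  case (add G u M n D T m)
  then have "G k = {#}" "typings cbot (ctx_drop k G) v M n"
    "D k = {#}" "typing cbot (ctx_drop k D) v T m" by blast+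
  moreover from this have "(G + D) k = {#}" by (simp add: plus_fun_apply)
  ultimately show ?case using typing_typings.add by fastforce
qed

lemma typing_subst:
  shows "typing cbot G b T n \<Longrightarrow> typings cbot E v (G k) p \<Longrightarrow>
      \<exists>n'. typing cbot (ctx_drop k G + E) (subst k v b) T n' \<and> n' + size (G k) = n + p"
    and "typings cbot G b M n \<Longrightarrow> typings cbot E v (G k) p \<Longrightarrow>
      \<exists>n'. typings cbot (ctx_drop k G + E) (subst k v b) M n' \<and> n' + size (G k) = n + p"
proof (induction arbitrary: k v E p and k v E p rule: typing_typings.inducts)
  case (Var x T)
  show ?case
  proof (cases "x = k")
    case True
    with Var have "typing cbot E v T p" by (simp add: typings_single_iff)
    with True show ?thesis by simp
  next
    case False
    with Var have "E = 0" "p = 0" by (simp_all add: typings_empty_iff)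
    define j where "j = (if x < k then x else x - 1)"
    have "ctx_drop k (ctx_single x T) = ctx_single j T" "subst k v (Var x) = Var j"
      using False by (simp_all add: ctx_drop_single j_def)
    moreover have "size (ctx_single x T k) = 0" using False by simp
    ultimately show ?thesis using typing_typings.Var[of cbot j T] \<open>E = 0\<close> \<open>p = 0\<close>
      by (intro exI[of _ 1]) simp
  qed
next
  case (Cst c T)
  have "(0 :: ctx) k = {#}" by (rule zero_fun_apply)
  with Cst have "E = 0" "p = 0" by (simp_all add: typings_empty_iff)
  with typing_typings.Cst[OF Cst(1)] \<open>(0 :: ctx) k = {#}\<close> show ?case by simp
next
  case (Lam G t T n)
  have "ctx_drop 0 G k = G (Suc k)" by (simp add: ctx_drop_def)
  with Lam.prems have "typings cbot (ctx_insert 0 E) (lift 0 v) (G (Suc k)) p"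
    by (simp add: typing_lift(2))
  with Lam.IH(2) obtain n' where n': "typing cbot (ctx_drop (Suc k) G + ctx_insert 0 E)
      (subst (Suc k) (lift 0 v) t) T n'" "n' + size (G (Suc k)) = n + p"
    by blast
  have "(ctx_drop (Suc k) G + ctx_insert 0 E) 0 = G 0" by (simp add: plus_fun_apply ctx_insert_def)
  with typing_typings.Lam[OF n'(1)] n'(2) \<open>ctx_drop 0 G k = G (Suc k)\<close> show ?case by force
next
  case (App G t M T n D u m)
  have "(G + D) k = G k + D k" by (rule plus_fun_apply)
  with App.prems obtain E1 E2 p1 p2 where E: "E = E1 + E2" "p = p1 + p2"
      "typings cbot E1 v (G k) p1" "typings cbot E2 v (D k) p2"
    by (auto elim: typings_split)
  from App.IH(2)[OF E(3)] obtain n1 where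
    n1: "typing cbot (ctx_drop k G + E1) (subst k v t) (Arr M T) n1" "n1 + size (G k) = n + p1"
    by blast
  from App.IH(4)[OF E(4)] obtain n2 where
    n2: "typings cbot (ctx_drop k D + E2) (subst k v u) M n2" "n2 + size (D k) = m + p2"
    by blast
  from typing_typings.App[OF n1(1) n2(1)] n1(2) n2(2) E(1,2) \<open>(G + D) k = G k + D k\<close>
  show ?case by (intro exI[of _ "Suc (n1 + n2)"]) (simp add: ac_simps)
next
  case (empty u)
  have "(0 :: ctx) k = {#}" by (rule zero_fun_apply)
  with empty have "E = 0" "p = 0" by (simp_all add: typings_empty_iff)
  with typing_typings.empty \<open>(0 :: ctx) k = {#}\<close> show ?case by simp
next
  case (add G u M n D T m)
  have "(G + D) k = G k + D k" by (rule plus_fun_apply)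
  with add.prems obtain E1 E2 p1 p2 where E: "E = E1 + E2" "p = p1 + p2"
      "typings cbot E1 v (G k) p1" "typings cbot E2 v (D k) p2"
    by (auto elim: typings_split)
  from add.IH(2)[OF E(3)] obtain n1 where
    n1: "typings cbot (ctx_drop k G + E1) (subst k v u) M n1" "n1 + size (G k) = n + p1"
    by blast
  from add.IH(4)[OF E(4)] obtain n2 where
    n2: "typing cbot (ctx_drop k D + E2) (subst k v u) T n2" "n2 + size (D k) = m + p2"
    by blast
  from typing_typings.add[OF n1(1) n2(1)] n1(2) n2(2) E(1,2) \<open>(G + D) k = G k + D k\<close>
  show ?case by (intro exI[of _ "n1 + n2"]) (simp add: ac_simps)
qed

definition ctx_subst :: "'c \<Rightarrow> nat \<Rightarrow> 'c lterm \<Rightarrow> ctx \<Rightarrow> ctx \<Rightarrow> bool" where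
  "ctx_subst cbot k v G1 G \<longleftrightarrow> (\<exists>E p. G = ctx_drop k G1 + E \<and> typings cbot E v (G1 k) p)"

lemma ctx_subst_single: "typing cbot G v T n \<Longrightarrow> ctx_subst cbot k v (ctx_single k T) G"
  unfolding ctx_subst_def by (auto simp: typings_single_iff)

lemma ctx_subst_unused: "G1 k = {#} \<Longrightarrow> ctx_subst cbot k v G1 (ctx_drop k G1)"
  unfolding ctx_subst_def by (auto simp: typings_empty_iff)

lemma ctx_subst_add:
  assumes "ctx_subst cbot k v G1 G" and "ctx_subst cbot k v G2 D"
  shows "ctx_subst cbot k v (G1 + G2) (G + D)"
proof -
  from assms obtain E1 p1 E2 p2 where "G = ctx_drop k G1 + E1" "typings cbot E1 v (G1 k) p1"
    "D = ctx_drop k G2 + E2" "typings cbot E2 v (G2 k) p2"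
    unfolding ctx_subst_def by blast
  then have "G + D = ctx_drop k (G1 + G2) + (E1 + E2)"
    and "typings cbot (E1 + E2) v ((G1 + G2) k) (p1 + p2)"
    by (simp_all add: ac_simps plus_fun_apply typings_union)
  then show ?thesis unfolding ctx_subst_def by blast
qed

lemma ctx_subst_lift:
  assumes "ctx_subst cbot (Suc k) (lift 0 v) G1 G"
  shows "ctx_subst cbot k v (ctx_drop 0 G1) (ctx_drop 0 G)" and "G 0 = G1 0"
proof -
  from assms obtain E p where G: "G = ctx_drop (Suc k) G1 + E"
    and E: "typings cbot E (lift 0 v) (G1 (Suc k)) p"
    unfolding ctx_subst_def by blast
  from typing_unlift(2)[OF E refl] have "E 0 = {#}" "typings cbot (ctx_drop 0 E) v (G1 (Suc k)) p"
    by blast+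
  moreover have "ctx_drop 0 G1 k = G1 (Suc k)" by (simp add: ctx_drop_def)
  ultimately show "ctx_subst cbot k v (ctx_drop 0 G1) (ctx_drop 0 G)" and "G 0 = G1 0"
    using G unfolding ctx_subst_def by (auto simp: plus_fun_apply)
qed

lemma typing_unsubst_Var:
  assumes "typing cbot G v T n"
  shows "\<exists>G1 n1. ctx_subst cbot k v G1 G \<and> typing cbot G1 (Var k) T n1"
  using ctx_subst_single[OF assms] typing_typings.Var[of cbot k T] by blast

lemma typing_unsubst:
  shows "typing cbot G s T n \<Longrightarrow> s = subst k v b \<Longrightarrow>
      \<exists>G1 n1. ctx_subst cbot k v G1 G \<and> typing cbot G1 b T n1"
    and "typings cbot G s M n \<Longrightarrow> s = subst k v b \<Longrightarrow>
      \<exists>G1 n1. ctx_subst cbot k v G1 G \<and> typings cbot G1 b M n1"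
proof (induction arbitrary: k v b and k v b rule: typing_typings.inducts)
  case (Var x T)
  show ?case
  proof (cases "b = Var k")
    case True
    with Var.prems have "v = Var x" by simp
    with True typing_unsubst_Var[OF typing_typings.Var[of cbot x T], of k] show ?thesis by simp
  next
    case False
    with Var obtain j where "b = Var j" "j \<noteq> k" "x = (if j < k then j else j - 1)"
      by (cases b) auto
    then have "ctx_drop k (ctx_single j T) = ctx_single x T" by (simp add: ctx_drop_single)
    with ctx_subst_unused[of "ctx_single j T" k] \<open>j \<noteq> k\<close>
    have "ctx_subst cbot k v (ctx_single j T) (ctx_single x T)" by simp
    with \<open>b = Var j\<close> typing_typings.Var[of cbot j T] show ?thesis by blast
  qed
next
  case (Cst c T)
  show ?case
  proof (cases "b = Var k")
    case True
    with Cst.prems have "v = Cst c" by simp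
    with True typing_unsubst_Var[OF typing_typings.Cst[OF Cst(1)], of k] show ?thesis by simp
  next
    case False
    with Cst have "b = Cst c" by (cases b) (auto split: if_splits)
    moreover have "ctx_subst cbot k v 0 0"
      using ctx_subst_unused[of 0 k] by (simp add: zero_fun_apply)
    ultimately show ?thesis using typing_typings.Cst[OF Cst(1)] by blast
  qed
next
  case (Lam G t T n)
  show ?case
  proof (cases "b = Var k")
    case True
    with Lam.prems have "v = Lam t" by simp
    with True typing_unsubst_Var[OF typing_typings.Lam[OF Lam(1)], of k] show ?thesis by simp
  next
    case False
    with Lam obtain b' where b: "b = Lam b'" "t = subst (Suc k) (lift 0 v) b'"
      by (cases b) (auto split: if_splits)
    with Lam.IH(2) obtain G1 n1 where "ctx_subst cbot (Suc k) (lift 0 v) G1 G" "typing cbot G1 b' T n1"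
      by blast
    with ctx_subst_lift typing_typings.Lam[of cbot G1 b' T n1] b(1) show ?thesis by metis
  qed
next
  case (App G t M T n D u m)
  show ?case
  proof (cases "b = Var k")
    case True
    with App.prems have "v = App t u" by simp
    with True typing_unsubst_Var[OF typing_typings.App[OF App(1,3)], of k] show ?thesis by simp
  next
    case False
    with App obtain b1 b2 where b: "b = App b1 b2" "t = subst k v b1" "u = subst k v b2"
      by (cases b) (auto split: if_splits)
    from App.IH(2)[OF b(2)] App.IH(4)[OF b(3)] obtain G1 n1 G2 n2 where
      "ctx_subst cbot k v G1 G" "typing cbot G1 b1 (Arr M T) n1"
      "ctx_subst cbot k v G2 D" "typings cbot G2 b2 M n2"
      by meson
    with b(1) show ?thesis by (blast intro: ctx_subst_add typing_typings.App)
  qed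
next
  case (empty u)
  have "ctx_subst cbot k v 0 0" using ctx_subst_unused[of 0 k] by (simp add: zero_fun_apply)
  with typing_typings.empty[of cbot b] show ?case by blast
next
  case (add G u M n D T m)
  from add.IH(2,4)[OF add.prems] obtain G1 n1 G2 n2 where
    "ctx_subst cbot k v G1 G" "typings cbot G1 b M n1"
    "ctx_subst cbot k v G2 D" "typing cbot G2 b T n2"
    by meson
  then show ?case by (blast intro: ctx_subst_add typing_typings.add)
qed

lemma typing_contract_redex:
  assumes "typing cbot G (App (Lam s) t) T n"
  obtains n' where "n' < n" "typing cbot G (subst 0 t s) T n'"
proof -
  from assms obtain G1 D M n1 m where a: "G = G1 + D" "typing cbot G1 (Lam s) (Arr M T) n1"
      "typings cbot D t M m" "n = Suc (n1 + m)"
    by (auto elim: typing_AppE)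
  from a(2) obtain G' n0 where b: "G1 = ctx_drop 0 G'" "M = G' 0" "typing cbot G' s T n0" "n1 = Suc n0"
    by (auto elim: typing_LamE)
  from typing_subst(1)[OF b(3)] a(3) b(2) obtain n' where
    "typing cbot (ctx_drop 0 G' + D) (subst 0 t s) T n'" "n' + size (G' 0) = n0 + m"
    by blast
  moreover from this(2) a(4) b(4) have "n' < n" by simp
  ultimately show ?thesis using a(1) b(1) that by blast
qed

lemma subject_reduction:
  "beta t t' \<Longrightarrow> typing cbot G t T n \<Longrightarrow> \<exists>n'\<le>n. typing cbot G t' T n'"
proof (induction arbitrary: G T n rule: beta.induct)
  case (root s t)
  then show ?case by (meson less_imp_le typing_contract_redex)
next
  case (appL s s' t)
  from appL.prems obtain G1 D M n1 m where a: "G = G1 + D" "typing cbot G1 s (Arr M T) n1"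
      "typings cbot D t M m" "n = Suc (n1 + m)"
    by (auto elim: typing_AppE)
  with appL.IH obtain n1' where "n1' \<le> n1" "typing cbot G1 s' (Arr M T) n1'" by blast
  with a show ?case by (intro exI[of _ "Suc (n1' + m)"]) (auto intro: typing_typings.App)
next
  case (appR s s' t)
  from appR.prems obtain G1 D M n1 m where a: "G = G1 + D" "typing cbot G1 t (Arr M T) n1"
      "typings cbot D s M m" "n = Suc (n1 + m)"
    by (auto elim: typing_AppE)
  have "\<exists>m'\<le>m. typings cbot D s' M m'"
    by (rule typings_transfer_le[OF a(3)]) (use appR.IH in blast)
  then obtain m' where "m' \<le> m" "typings cbot D s' M m'" by blast
  with a show ?case by (intro exI[of _ "Suc (n1 + m')"]) (auto intro: typing_typings.App)
next
  case (lam s s')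
  from lam.prems obtain G' T' n0 where a: "G = ctx_drop 0 G'" "T = Arr (G' 0) T'"
      "typing cbot G' s T' n0" "n = Suc n0"
    by (auto elim: typing_LamE)
  with lam.IH obtain n0' where "n0' \<le> n0" "typing cbot G' s' T' n0'" by blast
  with a show ?case by (auto intro: typing_typings.Lam)
qed

lemma subject_reduction_star:
  assumes "beta_star t t'" and "typing cbot G t T n"
  shows "\<exists>n'\<le>n. typing cbot G t' T n'"
  using assms(1)
proof (induction rule: rtranclp_induct)
  case base
  then show ?case using assms(2) by blast
next
  case (step y z)
  then show ?case by (meson order_trans subject_reduction)
qed

lemma subject_expansion:
  "beta t t' \<Longrightarrow> typing cbot G t' T n \<Longrightarrow> \<exists>n'. typing cbot G t T n'"
proof (induction arbitrary: G T n rule: beta.induct)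
  case (root s t)
  from typing_unsubst(1)[OF root.prems refl] obtain G1 E n1 p where
    "G = ctx_drop 0 G1 + E" "typing cbot G1 s T n1" "typings cbot E t (G1 0) p"
    unfolding ctx_subst_def by blast
  then show ?case by (blast intro: typing_typings.App typing_typings.Lam)
next
  case (appL s s' t)
  then show ?case by (blast elim: typing_AppE intro: typing_typings.App)
next
  case (appR s s' t)
  from appR.prems obtain G1 D M n1 m where a: "G = G1 + D" "typing cbot G1 t (Arr M T) n1"
      "typings cbot D s' M m"
    by (auto elim: typing_AppE)
  have "\<exists>m'. typings cbot D s M m'"
    by (rule typings_transfer_ex[OF a(3)]) (use appR.IH in blast)
  with a show ?case by (auto intro: typing_typings.App)
next
  case (lam s s')
  then show ?case by (blast elim: typing_LamE intro: typing_typings.Lam)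
qed

lemma subject_expansion_star:
  "beta_star t t' \<Longrightarrow> typing cbot G t' T n \<Longrightarrow> \<exists>n'. typing cbot G t T n'"
proof (induction arbitrary: n rule: converse_rtranclp_induct)
  case (step y z)
  then show ?case by (meson subject_expansion)
qed blast

(* Well-founded induction on the derivation size replaces coinduction on beta_inf. *)
lemma typing_beta_inf:
  assumes "typing cbot G t T n" and "beta_inf t s"
  shows "\<exists>n'. typing cbot G s T n'"
  using assms
proof (induction n arbitrary: G t T s rule: less_induct)
  case (less n)
  from less.prems(2) show ?case
  proof cases
    case atom
    with subject_reduction_star[OF _ less.prems(1)] show ?thesis by blast
  next
    case (app t1 t2 t1' t2')
    from subject_reduction_star[OF app(2) less.prems(1)] obtain n0 where
      "n0 \<le> n" "typing cbot G (App t1 t2) T n0"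
      by blast
    then obtain G1 D M n1 m where a: "G = G1 + D" "typing cbot G1 t1 (Arr M T) n1"
        "typings cbot D t2 M m" "n1 + m < n"
      by (auto elim: typing_AppE)
    from a(4) have "n1 < n" by simp
    from less.IH[OF this a(2) app(3)] obtain n1' where t1': "typing cbot G1 t1' (Arr M T) n1'"
      by blast
    have "\<exists>m'. typings cbot D t2' M m'"
    proof (rule typings_transfer_ex[OF a(3)])
      fix D' T' k
      assume "k \<le> m" "typing cbot D' t2 T' k"
      moreover from this(1) a(4) have "k < n" by simp
      ultimately show "\<exists>k'. typing cbot D' t2' T' k'" using less.IH app(4) by blast
    qed
    then obtain m' where "typings cbot D t2' M m'" by blast
    from typing_typings.App[OF t1' this] a(1) app(1) show ?thesis by blast
  next
    case (lam r r')
    from subject_reduction_star[OF lam(2) less.prems(1)] obtain n0 where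
      "n0 \<le> n" "typing cbot G (Lam r) T n0"
      by blast
    then obtain G' T' n1 where a: "G = ctx_drop 0 G'" "T = Arr (G' 0) T'"
        "typing cbot G' r T' n1" "n1 < n"
      by (auto elim: typing_LamE)
    from less.IH[OF a(4) a(3) lam(3)] obtain n1' where "typing cbot G' r' T' n1'" by blast
    from typing_typings.Lam[OF this] a(1,2) lam(1) show ?thesis by blast
  qed
qed

lemma beta_star_appL: "beta_star s s' \<Longrightarrow> beta_star (App s t) (App s' t)"
  by (induction rule: rtranclp_induct) (auto intro: rtranclp.rtrancl_into_rtrancl beta.appL)

lemma beta_star_lam: "beta_star s s' \<Longrightarrow> beta_star (Lam s) (Lam s')"
  by (induction rule: rtranclp_induct) (auto intro: rtranclp.rtrancl_into_rtrancl beta.lam)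

lemma lams_Suc: "lams (Suc m) t = Lam (lams m t)"
  by (simp add: lams_def)

lemma apps_snoc: "apps a (ts @ [t]) = App (apps a ts) t"
  by (simp add: apps_def)

lemma hnf_atom: "is_atom a \<Longrightarrow> a \<noteq> Cst cbot \<Longrightarrow> hnf cbot a"
  unfolding hnf_def by (intro exI[of _ 0] exI[of _ a] exI[of _ "[]"]) (simp add: lams_def apps_def)

lemma typable_has_hnf:
  assumes "typing cbot G t T n"
  shows "has_hnf cbot t"
  using assms
proof (induction n arbitrary: G t T rule: less_induct)
  case (less n)
  show ?case
  proof (cases t)
    case (Cst c)
    with less.prems have "c \<noteq> cbot" by (auto elim: typing_CstE)
    with Cst show ?thesis unfolding has_hnf_def by (blast intro: hnf_atom[unfolded is_atom_def])
  next
    case (Var x)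
    then show ?thesis unfolding has_hnf_def by (blast intro: hnf_atom[unfolded is_atom_def])
  next
    case (Lam t')
    with less.prems obtain G' T' n' where "typing cbot G' t' T' n'" "n' < n"
      by (auto elim: typing_LamE)
    with less.IH obtain m a ts where "beta_star t' (lams m (apps a ts))" "is_atom a" "a \<noteq> Cst cbot"
      unfolding has_hnf_def hnf_def by blast
    with Lam show ?thesis unfolding has_hnf_def hnf_def
      by (metis beta_star_lam lams_Suc)
  next
    case (App t1 t2)
    with less.prems obtain G1 D M n1 m where "typing cbot G1 t1 (Arr M T) n1" "n1 < n"
      by (auto elim: typing_AppE)
    with less.IH obtain k a ts where t1: "beta_star t1 (lams k (apps a ts))" "is_atom a" "a \<noteq> Cst cbot"
      unfolding has_hnf_def hnf_def by blast
    then have reduct: "beta_star t (App (lams k (apps a ts)) t2)"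
      using App beta_star_appL by blast
    show ?thesis
    proof (cases k)
      case 0
      with t1 reduct show ?thesis unfolding has_hnf_def hnf_def
        by (metis apps_snoc funpow_0 lams_def)
    next
      case (Suc k')
      with reduct have "beta_star t (App (Lam (lams k' (apps a ts))) t2)" by (simp add: lams_Suc)
      moreover from subject_reduction_star[OF this less.prems] obtain n' where
        "n' < n" "typing cbot G (subst 0 t2 (lams k' (apps a ts))) T n'"
        by (meson order_less_le_trans typing_contract_redex)
      ultimately show ?thesis using less.IH unfolding has_hnf_def
        by (meson beta.root rtranclp.rtrancl_into_rtrancl rtranclp_trans)
    qed
  qed
qed

lemma typing_apps:
  "typing cbot G a ((Arr {#} ^^ length ts) T) n \<Longrightarrow> typing cbot G (apps a ts) T (n + length ts)"
proof (induction ts arbitrary: T rule: rev_induct)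
  case Nil
  then show ?case by (simp add: apps_def)
next
  case (snoc t ts)
  then have "typing cbot G (apps a ts) (Arr {#} T) (n + length ts)"
    by (simp add: funpow_swap1)
  from typing_typings.App[OF this typing_typings.empty] show ?case
    by (simp add: apps_snoc)
qed

lemma typing_lams: "typing cbot G t T n \<Longrightarrow> \<exists>G T n. typing cbot G (lams m t) T n"
proof (induction m)
  case 0
  then show ?case by (auto simp: lams_def)
next
  case (Suc m)
  then show ?case by (auto simp: lams_Suc intro: typing_typings.Lam)
qed

lemma hnf_typable:
  assumes "hnf cbot h"
  shows "\<exists>G T n. typing cbot G h T n"
proof -
  from assms obtain m a ts where h: "h = lams m (apps a ts)" "is_atom a" "a \<noteq> Cst cbot"
    unfolding hnf_def by blast
  obtain G where "typing cbot G a ((Arr {#} ^^ length ts) Base) 1"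
    using h(2) unfolding is_atom_def
  proof (elim disjE exE)
    fix x
    assume "a = Var x"
    with that typing_typings.Var show ?thesis by metis
  next
    fix c
    assume "a = Cst c"
    with that typing_typings.Cst h(3) show ?thesis by metis
  qed
  from typing_lams[OF typing_apps[OF this]] h(1) show ?thesis by blast
qed

theorem lemma5p20:
  fixes cbot :: 'c and t s :: "'c lterm"
  assumes "beta_inf t s" and "has_hnf cbot t"
  shows "has_hnf cbot s"
proof -
  from assms(2) obtain h where "beta_star t h" "hnf cbot h" unfolding has_hnf_def by blast
  from hnf_typable[OF this(2)] obtain G T n where "typing cbot G h T n" by blast
  from subject_expansion_star[OF \<open>beta_star t h\<close> this] obtain n' where "typing cbot G t T n'" by blast
  from typing_beta_inf[OF this assms(1)] obtain n'' where "typing cbot G s T n''" by blast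
  then show ?thesis by (rule typable_has_hnf)
qed

end
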